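(* Let $\rho,\sigma$ be positive definite density operators on a finite-dimensional Hilbert space $\mathcal{H}$, and let $\mathcal{N}$ be a strictly positive completely positive trace-preserving map from operators on $\mathcal{H}$ to operators on a finite-dimensional Hilbert space, with adjoint $\mathcal{N}^\dagger$. Then $$\lim_{p\to0}\Big[\sigma^{p/2}\,\mathcal{N}^\dagger\big([\mathcal{N}(\sigma)]^{-p/2}[\mathcal{N}(\rho)]^{p}[\mathcal{N}(\sigma)]^{-p/2}\big)\,\sigma^{p/2}\Big]^{1/p}=\exp\big\{\log\sigma+\mathcal{N}^\dagger\big(\log\mathcal{N}(\rho)-\log\mathcal{N}(\sigma)\big)\big\}.$$
   Context: A linear map is strictly positive if it maps positive definite operators to positive definite operators. The adjoint $\mathcal{N}^\dagger$ is defined with respect to the Hilbert–Schmidt inner product, $\mathrm{Tr}\{Y\mathcal{N}(X)\}=\mathrm{Tr}\{\mathcal{N}^\dagger(Y)X\}$; it is unital. $\log$ is the natural logarithm and the limit is with respect to real $p\to0$. *)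

theory Defs
  imports "HOL-Analysis.Analysis"
begin

definition cadj :: "complex^'n^'m \<Rightarrow> complex^'m^'n" where
  "cadj A = (\<chi> i j. cnj (A $ j $ i))"

definition cscaleM :: "complex \<Rightarrow> complex^'n^'m \<Rightarrow> complex^'n^'m" where
  "cscaleM c X = (\<chi> i j. c * X $ i $ j)"

definition sform :: "complex^'n \<Rightarrow> complex^'n^'n \<Rightarrow> complex^'n \<Rightarrow> complex" where
  "sform x A y = (\<Sum>a\<in>UNIV. cnj (x $ a) * (A *v y) $ a)"

definition psd :: "complex^'n^'n \<Rightarrow> bool" where
  "psd A \<longleftrightarrow> (\<forall>x. sform x A x \<in> \<real> \<and> 0 \<le> Re (sform x A x))"

definition posdef :: "complex^'n^'n \<Rightarrow> bool" where
  "posdef A \<longleftrightarrow> (\<forall>x. x \<noteq> 0 \<longrightarrow> sform x A x \<in> \<real> \<and> 0 < Re (sform x A x))"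

definition density :: "complex^'n^'n \<Rightarrow> bool" where
  "density A \<longleftrightarrow> psd A \<and> trace A = 1"

definition unitary :: "complex^'n^'n \<Rightarrow> bool" where
  "unitary U \<longleftrightarrow> cadj U ** U = mat 1 \<and> U ** cadj U = mat 1"

definition rdiag :: "('n \<Rightarrow> real) \<Rightarrow> complex^'n^'n" where
  "rdiag d = (\<chi> i j. if i = j then complex_of_real (d i) else 0)"

definition mfun :: "(real \<Rightarrow> real) \<Rightarrow> complex^'n^'n \<Rightarrow> complex^'n^'n" where
  "mfun f A = (SOME B. \<exists>U (l::'n \<Rightarrow> real). unitary U \<and> A = U ** rdiag l ** cadj U
                        \<and> B = U ** rdiag (f \<circ> l) ** cadj U)"

definition mpow :: "complex^'n^'n \<Rightarrow> real \<Rightarrow> complex^'n^'n" where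
  "mpow A p = mfun (\<lambda>x. x powr p) A"

definition mlog :: "complex^'n^'n \<Rightarrow> complex^'n^'n" where
  "mlog A = mfun ln A"

definition mexp :: "complex^'n^'n \<Rightarrow> complex^'n^'n" where
  "mexp A = mfun exp A"

definition clinear_map :: "(complex^'n^'n \<Rightarrow> complex^'m^'m) \<Rightarrow> bool" where
  "clinear_map N \<longleftrightarrow> (\<forall>X Y c. N (X + Y) = N X + N Y \<and> N (cscaleM c X) = cscaleM c (N X))"

text \<open>Positivity of the k x k block operator [X i j] on (C^n)^k.\<close>
definition block_psd :: "nat \<Rightarrow> (nat \<Rightarrow> nat \<Rightarrow> complex^'n^'n) \<Rightarrow> bool" where
  "block_psd k X \<longleftrightarrow> (\<forall>v :: nat \<Rightarrow> complex^'n.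
     (\<Sum>i<k. \<Sum>j<k. sform (v i) (X i j) (v j)) \<in> \<real> \<and>
     0 \<le> Re (\<Sum>i<k. \<Sum>j<k. sform (v i) (X i j) (v j)))"

text \<open>Complete positivity: id_k \<otimes> N is positive for every k.\<close>
definition completely_positive :: "(complex^'n^'n \<Rightarrow> complex^'m^'m) \<Rightarrow> bool" where
  "completely_positive N \<longleftrightarrow>
     (\<forall>k X. block_psd k X \<longrightarrow> block_psd k (\<lambda>i j. N (X i j)))"

definition trace_preserving :: "(complex^'n^'n \<Rightarrow> complex^'m^'m) \<Rightarrow> bool" where
  "trace_preserving N \<longleftrightarrow> (\<forall>X. trace (N X) = trace X)"

definition strictly_positive :: "(complex^'n^'n \<Rightarrow> complex^'m^'m) \<Rightarrow> bool" where
  "strictly_positive N \<longleftrightarrow> (\<forall>X. posdef X \<longrightarrow> posdef (N X))"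

definition madjoint :: "(complex^'n^'n \<Rightarrow> complex^'m^'m) \<Rightarrow> complex^'m^'m \<Rightarrow> complex^'n^'n" where
  "madjoint N = (SOME M. \<forall>X Y. trace (Y ** N X) = trace (M Y ** X))"

end

theory Submission
  imports Defs
begin

text \<open>Let \<open>F(p)\<close> be the operator raised to the power \<open>1/p\<close>. Differentiating
  \<open>A\<^bsup>e(p)\<^esup> = U diag(\<lambda>\<^bsup>e(p)\<^esup>) U\<^sup>*\<close> in an eigenbasis and using the product rule, together with
  linearity of \<open>N\<^sup>\<dagger>\<close> and its unitality (which is trace preservation of \<open>N\<close>), gives \<open>F(0) = 1\<close> and
  \<open>F'(0) = L = log \<sigma> + N\<^sup>\<dagger>(log N(\<rho>) - log N(\<sigma>))\<close>. Since a strictly positive map preserves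
  Hermiticity, \<open>F(p)\<close> is Hermitian, and eigenvalue-wise \<open>ln x = (x - 1) + O((x - 1)\<^sup>2)\<close> shows
  \<open>(1/p) log F(p) \<rightarrow> L\<close>. Finally \<open>F(p)\<^bsup>1/p\<^esup> = exp((1/p) log F(p)) \<rightarrow> exp L\<close>, the matrix
  exponential being continuous on Hermitian matrices as a locally uniform limit of its Taylor
  polynomials.\<close>

section \<open>Diagonalised matrices and the functional calculus\<close>

abbreviation hermitian :: "complex^'n^'n \<Rightarrow> bool" where
  "hermitian A \<equiv> cadj A = A"

lemma cadj_nth [simp]: "cadj A $ i $ j = cnj (A $ j $ i)"
  by (simp add: cadj_def)

lemma rdiag_nth [simp]: "rdiag d $ i $ j = (if i = j then complex_of_real (d i) else 0)"
  by (simp add: rdiag_def)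

lemma cscaleM_nth [simp]: "cscaleM c X $ i $ j = c * X $ i $ j"
  by (simp add: cscaleM_def)

lemma mat_nth: "mat k $ i $ j = (if i = j then k else 0)"
  by (simp add: mat_def)

lemma matrix_mult_nth: "(A ** B) $ i $ j = (\<Sum>k\<in>UNIV. A $ i $ k * B $ k $ j)"
  by (simp add: matrix_matrix_mult_def)

lemma matrix_add_rdistrib: "(A + B) ** C = A ** C + B ** (C :: 'a::semiring_1^_^_)"
  by (simp add: vec_eq_iff matrix_mult_nth sum.distrib distrib_right)

lemma matrix_diff_ldistrib: "C ** (A - B) = C ** A - C ** (B :: 'a::ring_1^_^_)"
  by (simp add: vec_eq_iff matrix_mult_nth sum_subtractf right_diff_distrib)

lemma matrix_diff_rdistrib: "(A - B) ** C = A ** C - B ** (C :: 'a::ring_1^_^_)"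
  by (simp add: vec_eq_iff matrix_mult_nth sum_subtractf left_diff_distrib)

lemma cadj_cadj [simp]: "cadj (cadj A) = A"
  by (simp add: vec_eq_iff)

lemma cadj_mult: "cadj (A ** B) = cadj B ** cadj A"
  by (simp add: vec_eq_iff matrix_mult_nth mult.commute)

lemma cadj_add: "cadj (A + B) = cadj A + cadj B"
  by (simp add: vec_eq_iff)

lemma cadj_diff: "cadj (A - B) = cadj A - cadj B"
  by (simp add: vec_eq_iff)

lemma cadj_cscaleM: "cadj (cscaleM c X) = cscaleM (cnj c) (cadj X)"
  by (simp add: vec_eq_iff)

lemma cadj_mat_1 [simp]: "cadj (mat 1) = mat 1"
  by (simp add: vec_eq_iff mat_nth)

lemma cadj_mat [simp]: "cadj (mat (complex_of_real r)) = mat (complex_of_real r)"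
  by (simp add: vec_eq_iff mat_nth)

lemma cadj_rdiag [simp]: "cadj (rdiag d) = rdiag d"
  by (simp add: vec_eq_iff)

lemma matrix_mult_rdiag_nth: "(A ** rdiag d) $ i $ j = A $ i $ j * d j"
  by (simp add: matrix_mult_nth if_distrib cong: if_cong)

lemma rdiag_matrix_mult_nth: "(rdiag d ** A) $ i $ j = d i * A $ i $ j"
  by (simp add: matrix_mult_nth if_distrib if_distribR cong: if_cong)

lemma rdiag_mult: "rdiag a ** rdiag b = rdiag (\<lambda>i. a i * b i)"
  by (simp add: vec_eq_iff matrix_mult_rdiag_nth)

lemma cadj_scaleR: "cadj (r *\<^sub>R A) = r *\<^sub>R cadj A"
  by (simp add: vec_eq_iff cadj_def)

lemma rdiag_0 [simp]: "rdiag (\<lambda>i. 0) = 0"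
  by (simp add: vec_eq_iff)

lemma rdiag_1: "rdiag (\<lambda>i. 1) = mat 1"
  by (simp add: vec_eq_iff mat_nth)

lemma rdiag_scaleR: "r *\<^sub>R rdiag d = rdiag (\<lambda>i. r * d i)"
  unfolding vec_eq_iff by (simp add: rdiag_def) (simp add: scaleR_conv_of_real)

lemma rdiag_add: "rdiag a + rdiag b = rdiag (\<lambda>i. a i + b i)"
  by (simp add: vec_eq_iff)

lemma rdiag_diff: "rdiag a - rdiag b = rdiag (\<lambda>i. a i - b i)"
  by (simp add: vec_eq_iff)

lemma conj_rdiag_add:
  "U ** rdiag a ** cadj U + U ** rdiag b ** cadj U = U ** rdiag (\<lambda>i. a i + b i) ** cadj U"
  by (simp add: rdiag_add[symmetric] matrix_add_ldistrib matrix_add_rdistrib)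

lemma conj_rdiag_diff:
  "U ** rdiag a ** cadj U - U ** rdiag b ** cadj U = U ** rdiag (\<lambda>i. a i - b i) ** cadj U"
  by (simp add: rdiag_diff[symmetric] matrix_diff_ldistrib matrix_diff_rdistrib)

lemma conj_rdiag_scaleR: "r *\<^sub>R (U ** rdiag a ** cadj U) = U ** rdiag (\<lambda>i. r * a i) ** cadj U"
  by (simp add: rdiag_scaleR[symmetric] scalar_matrix_assoc matrix_scalar_ac)

lemma hermitian_conj_rdiag: "hermitian (U ** rdiag a ** cadj U)"
  by (simp add: cadj_mult matrix_mul_assoc)

lemma conj_rdiag_1: "unitary U \<Longrightarrow> U ** rdiag (\<lambda>i. 1) ** cadj U = mat 1"
  by (simp add: rdiag_1 unitary_def)

lemma conj_rdiag_mult: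
  assumes "unitary U"
  shows "(U ** rdiag a ** cadj U) ** (U ** rdiag b ** cadj U) = U ** rdiag (\<lambda>i. a i * b i) ** cadj U"
proof -
  have "(U ** rdiag a ** cadj U) ** (U ** rdiag b ** cadj U) = U ** rdiag a ** (cadj U ** U) ** rdiag b ** cadj U"
    by (simp add: matrix_mul_assoc)
  also have "\<dots> = U ** rdiag (\<lambda>i. a i * b i) ** cadj U"
    using assms by (simp add: unitary_def rdiag_mult flip: matrix_mul_assoc)
  finally show ?thesis .
qed

text \<open>A unitary intertwining two diagonal matrices only connects equal eigenvalues, so the
  functional calculus does not depend on the chosen diagonalisation.\<close>

lemma conj_rdiag_comp_eq:
  assumes U: "unitary U" and V: "unitary V"
    and eq: "U ** rdiag l ** cadj U = V ** rdiag m ** cadj V"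
  shows "U ** rdiag (f \<circ> l) ** cadj U = V ** rdiag (f \<circ> m) ** cadj V"
proof -
  define W where "W = cadj V ** U"
  have "cadj V ** (U ** rdiag l ** cadj U) ** U = cadj V ** (V ** rdiag m ** cadj V) ** U"
    using eq by simp
  hence "W ** rdiag l = rdiag m ** W"
    using U V by (simp add: W_def unitary_def matrix_mul_assoc) (simp flip: matrix_mul_assoc)
  hence intertw: "W $ i $ j * l j = m i * W $ i $ j" for i j
    by (metis matrix_mult_rdiag_nth rdiag_matrix_mult_nth)
  have "W $ i $ j * f (l j) = f (m i) * W $ i $ j" for i j
  proof (cases "W $ i $ j = 0")
    case False
    with intertw[of i j] have "l j = m i" by (simp add: mult.commute)
    thus ?thesis by (simp add: mult.commute)
  qed simp
  hence W_comp: "W ** rdiag (f \<circ> l) = rdiag (f \<circ> m) ** W"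
    by (simp add: vec_eq_iff matrix_mult_rdiag_nth rdiag_matrix_mult_nth)
  have "U ** rdiag (f \<circ> l) ** cadj U = (V ** cadj V) ** U ** rdiag (f \<circ> l) ** cadj U"
    using V by (simp add: unitary_def)
  also have "\<dots> = V ** (W ** rdiag (f \<circ> l)) ** cadj U"
    by (simp add: W_def matrix_mul_assoc)
  also have "\<dots> = V ** rdiag (f \<circ> m) ** (cadj V ** (U ** cadj U))"
    unfolding W_comp by (simp add: W_def matrix_mul_assoc)
  also have "\<dots> = V ** rdiag (f \<circ> m) ** cadj V"
    using U by (simp add: unitary_def)
  finally show ?thesis .
qed

lemma mfun_conj_rdiag:
  assumes U: "unitary U" and A: "A = U ** rdiag l ** cadj U"
  shows "mfun f A = U ** rdiag (f \<circ> l) ** cadj U"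
proof -
  have "\<exists>V m. unitary V \<and> A = V ** rdiag m ** cadj V \<and> mfun f A = V ** rdiag (f \<circ> m) ** cadj V"
    unfolding mfun_def by (rule someI_ex) (use U A in blast)
  then obtain V m where "unitary V" "A = V ** rdiag m ** cadj V"
    and "mfun f A = V ** rdiag (f \<circ> m) ** cadj V"
    by blast
  thus ?thesis using conj_rdiag_comp_eq[OF U \<open>unitary V\<close>, of l m f] A by simp
qed

lemma mpow_conj_rdiag:
  "unitary U \<Longrightarrow> A = U ** rdiag l ** cadj U \<Longrightarrow> mpow A t = U ** rdiag (\<lambda>k. l k powr t) ** cadj U"
  unfolding mpow_def by (drule mfun_conj_rdiag) (auto simp: o_def)

lemma mlog_conj_rdiag:
  "unitary U \<Longrightarrow> A = U ** rdiag l ** cadj U \<Longrightarrow> mlog A = U ** rdiag (\<lambda>k. ln (l k)) ** cadj U"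
  unfolding mlog_def by (drule mfun_conj_rdiag) (auto simp: o_def)

lemma mexp_conj_rdiag:
  "unitary U \<Longrightarrow> A = U ** rdiag l ** cadj U \<Longrightarrow> mexp A = U ** rdiag (\<lambda>k. exp (l k)) ** cadj U"
  unfolding mexp_def by (drule mfun_conj_rdiag) (auto simp: o_def)

section \<open>The spectral theorem for Hermitian matrices\<close>

definition cinner :: "complex^'n \<Rightarrow> complex^'n \<Rightarrow> complex" where
  "cinner x y = (\<Sum>a\<in>UNIV. cnj (x $ a) * y $ a)"

lemma sform_cinner: "sform x A y = cinner x (A *v y)"
  by (simp add: sform_def cinner_def)

lemma scaleR_eq_vector_scalar_mult: "t *\<^sub>R x = complex_of_real t *s (x::complex^'n)"
  unfolding vec_eq_iff by simp (simp add: scaleR_conv_of_real)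

lemma mat_matrix_vector_mult: "mat c *v x = c *s (x::complex^'n)"
  by (simp add: vec_eq_iff matrix_vector_mult_def mat_nth if_distrib if_distribR cong: if_cong)

lemma cinner_add_left: "cinner (x + y) z = cinner x z + cinner y z"
  by (simp add: cinner_def sum.distrib distrib_right)

lemma cinner_add_right: "cinner z (x + y) = cinner z x + cinner z y"
  by (simp add: cinner_def sum.distrib distrib_left)

lemma cinner_diff_right: "cinner z (x - y) = cinner z x - cinner z y"
  by (simp add: cinner_def sum_subtractf right_diff_distrib)

lemma cinner_smult_left: "cinner (c *s x) z = cnj c * cinner x z"
  by (simp add: cinner_def sum_distrib_left mult.assoc)

lemma cinner_smult_right: "cinner z (c *s x) = c * cinner z x"
  by (simp add: cinner_def sum_distrib_left mult.left_commute)

lemma cinner_commute: "cinner x y = cnj (cinner y x)"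
  by (simp add: cinner_def mult.commute)

lemma cinner_zero_left [simp]: "cinner 0 x = 0"
  by (simp add: cinner_def)

lemma cinner_zero_right [simp]: "cinner x 0 = 0"
  by (simp add: cinner_def)

lemma cinner_adj: "cinner x (A *v y) = cinner (cadj A *v x) y"
proof -
  have "cinner x (A *v y) = (\<Sum>a\<in>UNIV. \<Sum>b\<in>UNIV. cnj (x $ a) * A $ a $ b * y $ b)"
    by (simp add: cinner_def matrix_vector_mult_def sum_distrib_left mult.assoc)
  also have "\<dots> = (\<Sum>b\<in>UNIV. \<Sum>a\<in>UNIV. cnj (x $ a) * A $ a $ b * y $ b)"
    by (rule sum.swap)
  also have "\<dots> = cinner (cadj A *v x) y"
    by (simp add: cinner_def matrix_vector_mult_def sum_distrib_left mult_ac)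
  finally show ?thesis .
qed

lemma cinner_cadj_self: "cinner x (cadj A *v x) = cnj (cinner x (A *v x))"
  by (metis cadj_cadj cinner_adj cinner_commute)

lemma inner_eq_Re_cinner: "x \<bullet> y = Re (cinner x (y::complex^'n))"
  by (simp add: inner_vec_def cinner_def inner_complex_def Re_sum)

lemma cinner_self: "cinner x x = complex_of_real ((norm x)\<^sup>2)"
proof -
  have "Im (cinner x x) = 0" by (simp add: cinner_def Im_sum)
  moreover have "Re (cinner x x) = (norm x)\<^sup>2"
    by (simp flip: inner_eq_Re_cinner add: power2_norm_eq_inner)
  ultimately show ?thesis by (simp add: complex_eq_iff)
qed

lemma hermitian_form_real: "hermitian A \<Longrightarrow> cinner x (A *v x) \<in> \<real>"
  by (metis Reals_cnj_iff cinner_cadj_self)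

lemma Re_cinner_hermitian_add_scaleR:
  assumes "hermitian B"
  shows "Re (cinner (v + t *\<^sub>R w) (B *v (v + t *\<^sub>R w))) =
     Re (cinner v (B *v v)) + 2 * t * Re (cinner w (B *v v)) + t\<^sup>2 * Re (cinner w (B *v w))"
proof -
  have "cinner (v + t *\<^sub>R w) (B *v (v + t *\<^sub>R w)) =
     cinner v (B *v v) + of_real t * cinner v (B *v w) + of_real t * cinner w (B *v v)
       + of_real t * of_real t * cinner w (B *v w)"
    by (simp add: scaleR_eq_vector_scalar_mult matrix_vector_right_distrib vector_scalar_commute
        cinner_add_left cinner_add_right cinner_smult_left cinner_smult_right algebra_simps)
  moreover have "Re (cinner v (B *v w)) = Re (cinner w (B *v v))"
    by (metis assms cinner_adj cinner_commute complex_cnj_cancel_iff cnj.sel(1))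
  ultimately show ?thesis by (simp add: power2_eq_square)
qed

text \<open>A nonnegative quadratic form vanishing at \<open>v\<close> has \<open>v\<close> in its radical: otherwise moving from
  \<open>v\<close> along a suitable \<open>w\<close> would make it negative.\<close>

lemma Re_cinner_eq_0_if_form_nonneg:
  fixes B :: "complex^'n^'n"
  assumes B: "hermitian B" and W: "subspace W" and v: "v \<in> W" "Re (cinner v (B *v v)) = 0"
    and nonneg: "\<And>x. x \<in> W \<Longrightarrow> 0 \<le> Re (cinner x (B *v x))" and w: "w \<in> W"
  shows "Re (cinner w (B *v v)) = 0"
proof (rule ccontr)
  define r where "r = Re (cinner w (B *v v))"
  define s where "s = Re (cinner w (B *v w))"
  define t where "t = - r / (s + 1)"
  assume "Re (cinner w (B *v v)) \<noteq> 0"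
  hence "r \<noteq> 0" by (simp add: r_def)
  have s: "s \<ge> 0" using nonneg[OF w] by (simp add: s_def)
  have "v + t *\<^sub>R w \<in> W" using v w W by (simp add: subspace_add subspace_scale)
  hence "0 \<le> Re (cinner (v + t *\<^sub>R w) (B *v (v + t *\<^sub>R w)))" by (rule nonneg)
  also have "\<dots> = 2 * t * r + t\<^sup>2 * s"
    using Re_cinner_hermitian_add_scaleR[OF B, of v t w] v(2) by (simp add: r_def s_def)
  also have "\<dots> = r\<^sup>2 * (- s - 2) / (s + 1)\<^sup>2"
    using s unfolding t_def by (simp add: divide_simps power2_eq_square) (simp add: algebra_simps)
  also have "\<dots> < 0"
    using s \<open>r \<noteq> 0\<close> by (intro divide_neg_pos mult_pos_neg) auto
  finally show False by simp
qed

text \<open>Maximise the quadratic form of \<open>A\<close> over the unit sphere of \<open>W\<close>, with maximum \<open>c\<close> at \<open>v\<close>.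
  Then \<open>c - A\<close> is nonnegative on \<open>W\<close> and vanishes at \<open>v\<close>, and as it maps \<open>v\<close> into \<open>W\<close> the
  previous lemma gives \<open>(c - A) v = 0\<close>.\<close>

lemma hermitian_eigenvector_in_invariant_subspace:
  fixes A :: "complex^'n^'n"
  assumes A: "hermitian A" and W: "subspace W" "W \<noteq> {0}"
    and inv: "\<And>x. x \<in> W \<Longrightarrow> A *v x \<in> W"
  shows "\<exists>v c. v \<in> W \<and> norm v = 1 \<and> A *v v = complex_of_real c *s v"
proof -
  define q where "q x = Re (cinner x (A *v x))" for x
  define S where "S = W \<inter> sphere 0 1"
  have S_compact: "compact S" unfolding S_def
    using closed_subspace[OF W(1)] compact_sphere by (simp add: closed_Int_compact)
  obtain x0 where "x0 \<in> W" "x0 \<noteq> 0" using W subspace_0 by blast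
  then have "(1 / norm x0) *\<^sub>R x0 \<in> S" using W by (simp add: S_def subspace_scale)
  hence S_ne: "S \<noteq> {}" by blast
  have q_cont: "continuous_on S q"
    unfolding q_def cinner_def matrix_vector_mult_def by (intro continuous_intros)
  obtain v where v: "v \<in> S" and v_max: "\<And>y. y \<in> S \<Longrightarrow> q y \<le> q v"
    using continuous_attains_sup[OF S_compact S_ne q_cont] by blast
  have vW: "v \<in> W" and nv: "norm v = 1" using v by (auto simp: S_def)
  define c where "c = q v"
  define B where "B = mat (complex_of_real c) - A"
  have B: "hermitian B" using A by (simp add: B_def cadj_diff)
  have Bv: "B *v x = complex_of_real c *s x - A *v x" for x
    by (simp add: B_def matrix_vector_mult_diff_rdistrib mat_matrix_vector_mult)
  have B_form: "Re (cinner x (B *v x)) = c * (norm x)\<^sup>2 - q x" for x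
    by (simp add: q_def Bv cinner_diff_right cinner_smult_right cinner_self)
  have B_nonneg: "0 \<le> Re (cinner x (B *v x))" if "x \<in> W" for x
  proof (cases "x = 0")
    case False
    have "(1 / norm x) *\<^sub>R x \<in> S" using that False W by (simp add: S_def subspace_scale)
    moreover have "q ((1 / norm x) *\<^sub>R x) = q x / (norm x)\<^sup>2"
      by (simp add: q_def scaleR_eq_vector_scalar_mult vector_scalar_commute cinner_smult_left
          cinner_smult_right power2_eq_square)
    ultimately have "q x / (norm x)\<^sup>2 \<le> c" using v_max unfolding c_def by metis
    thus ?thesis using False by (simp add: B_form divide_le_eq)
  qed simp
  have "B *v v = c *\<^sub>R v - A *v v"
    by (simp add: Bv scaleR_eq_vector_scalar_mult)
  hence "B *v v \<in> W" using W vW inv by (simp add: subspace_diff subspace_scale)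
  moreover have "Re (cinner v (B *v v)) = 0" by (simp add: B_form nv c_def)
  ultimately have "Re (cinner (B *v v) (B *v v)) = 0"
    using Re_cinner_eq_0_if_form_nonneg[OF B W(1) vW _ B_nonneg] by blast
  hence "B *v v = 0" by (simp add: cinner_self)
  hence "A *v v = complex_of_real c *s v" by (simp add: Bv)
  thus ?thesis using vW nv by blast
qed

text \<open>Real orthogonality to \<open>v i\<close> and to \<open>\<i> v i\<close> is complex orthogonality to \<open>v i\<close>; these
  \<open>2k\<close> real constraints cannot exhaust the real dimension \<open>2 CARD('n)\<close>.\<close>

lemma exists_nonzero_cinner_orthogonal:
  fixes v :: "nat \<Rightarrow> complex^'n"
  assumes k: "k < CARD('n)"
  shows "\<exists>x. x \<noteq> 0 \<and> (\<forall>i<k. cinner (v i) x = 0)"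
proof -
  define T where "T = v ` {..<k} \<union> (\<lambda>i. \<i> *s v i) ` {..<k}"
  have "card T \<le> card (v ` {..<k}) + card ((\<lambda>i. \<i> *s v i) ` {..<k})"
    unfolding T_def by (rule card_Un_le)
  also have "\<dots> \<le> k + k" by (intro add_mono) (auto intro: order.trans[OF card_image_le])
  finally have "dim (span T) \<le> 2 * k"
    using dim_le_card[OF order.refl, of T] by (simp add: T_def)
  define Orth where "Orth = {y \<in> UNIV. \<forall>x\<in>span T. orthogonal x y}"
  have "dim Orth + dim (span T) = dim (UNIV :: (complex^'n) set)"
    unfolding Orth_def by (rule dim_subspace_orthogonal_to_vectors) (auto simp: subspace_span)
  hence "dim Orth > 0" using \<open>dim (span T) \<le> 2 * k\<close> k by (simp add: dim_UNIV)
  then obtain y where y: "y \<in> Orth" "y \<noteq> 0" using dim_eq_0 by (metis less_irrefl subsetI singletonI)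
  have "cinner (v i) y = 0" if i: "i < k" for i
  proof -
    have "v i \<in> span T" "\<i> *s v i \<in> span T" using i by (auto simp: T_def intro: span_base)
    hence "Re (cinner (v i) y) = 0" "Re (cinner (\<i> *s v i) y) = 0"
      using y by (auto simp: Orth_def orthogonal_def inner_eq_Re_cinner)
    thus ?thesis by (simp add: cinner_smult_left complex_eq_iff)
  qed
  thus ?thesis using y by blast
qed

lemma hermitian_orthonormal_eigenvectors:
  fixes A :: "complex^'n^'n"
  assumes A: "hermitian A" and k: "k \<le> CARD('n)"
  shows "\<exists>v c. (\<forall>i<k. A *v v i = complex_of_real (c i) *s v i) \<and>
            (\<forall>i<k. \<forall>j<k. cinner (v i) (v j) = (if i = j then 1 else 0))"
  using k
proof (induction k)
  case (Suc k)
  then obtain v c where eig: "\<forall>i<k. A *v v i = complex_of_real (c i) *s v i"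
    and orth: "\<forall>i<k. \<forall>j<k. cinner (v i) (v j) = (if i = j then 1 else 0)" by auto
  define W where "W = {x. \<forall>i<k. cinner (v i) x = 0}"
  have "subspace W"
    by (auto simp: subspace_def W_def cinner_add_right scaleR_eq_vector_scalar_mult cinner_smult_right)
  moreover have "W \<noteq> {0}" using exists_nonzero_cinner_orthogonal[of k v] Suc.prems by (auto simp: W_def)
  moreover have "A *v x \<in> W" if "x \<in> W" for x
    using that A eig by (simp add: W_def cinner_adj cinner_smult_left)
  ultimately obtain u d where u: "u \<in> W" "norm u = 1" "A *v u = complex_of_real d *s u"
    using hermitian_eigenvector_in_invariant_subspace[OF A] by blast
  have "cinner u u = 1" using u by (simp add: cinner_self)
  moreover have "cinner (v i) u = 0" "cinner u (v i) = 0" if "i < k" for i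
    using u that by (auto simp: W_def cinner_commute[of u])
  ultimately show ?case using eig orth u
    by (intro exI[of _ "v(k := u)"] exI[of _ "c(k := d)"]) (auto simp: less_Suc_eq)
qed simp

theorem hermitian_spectral_decomposition:
  fixes A :: "complex^'n^'n"
  assumes A: "hermitian A"
  shows "\<exists>U l. unitary U \<and> A = U ** rdiag l ** cadj U"
proof -
  obtain v c where eig: "\<forall>i<CARD('n). A *v v i = complex_of_real (c i) *s v i"
    and orth: "\<forall>i<CARD('n). \<forall>j<CARD('n). cinner (v i) (v j) = (if i = j then 1 else 0)"
    using hermitian_orthonormal_eigenvectors[OF A order.refl] by blast
  obtain g :: "'n \<Rightarrow> nat" where g: "bij_betw g UNIV {0..<CARD('n)}"
    using ex_bij_betw_finite_nat[of "UNIV :: 'n set"] by auto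
  have g_less: "g j < CARD('n)" and g_eq: "g j = g k \<longleftrightarrow> j = k" for j k
    using g by (auto simp: bij_betw_def inj_def)
  define U :: "complex^'n^'n" where "U = (\<chi> a j. v (g j) $ a)"
  have "(cadj U ** U) $ j $ k = cinner (v (g j)) (v (g k))" for j k
    by (simp add: matrix_mult_nth U_def cinner_def)
  hence U1: "cadj U ** U = mat 1" using orth g_less g_eq by (simp add: vec_eq_iff mat_nth)
  hence U2: "U ** cadj U = mat 1" by (simp add: matrix_left_right_inverse)
  have "(A ** U) $ a $ k = (A *v v (g k)) $ a" for a k
    by (simp add: matrix_mult_nth U_def matrix_vector_mult_def)
  hence AU: "A ** U = U ** rdiag (c \<circ> g)"
    using eig g_less by (simp add: vec_eq_iff matrix_mult_rdiag_nth U_def mult.commute)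
  have "A = A ** (U ** cadj U)" using U2 by simp
  also have "\<dots> = U ** rdiag (c \<circ> g) ** cadj U" by (simp add: matrix_mul_assoc AU)
  finally show ?thesis using U1 U2 by (auto simp: unitary_def)
qed

lemma hermitian_mfun: "hermitian A \<Longrightarrow> hermitian (mfun f A)"
  by (metis hermitian_spectral_decomposition mfun_conj_rdiag hermitian_conj_rdiag)

section \<open>Positive definite matrices\<close>

lemma cinner_axis: "cinner (axis i 1) (A *v axis j 1) = A $ i $ j"
  by (simp add: cinner_def matrix_vector_mult_def axis_def if_distrib if_distribR cong: if_cong)

lemma matrix_eq_0_if_cinner_form_eq_0:
  fixes A :: "complex^'n^'n"
  assumes zero: "\<And>x. cinner x (A *v x) = 0"
  shows "A = 0"
proof -
  have polar: "cinner (axis i 1 + c *s axis j 1) (A *v (axis i 1 + c *s axis j 1)) =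
      A $ i $ i + c * A $ i $ j + cnj c * A $ j $ i + cnj c * c * A $ j $ j" for i j c
    by (simp add: matrix_vector_right_distrib vector_scalar_commute cinner_add_left
        cinner_add_right cinner_smult_left cinner_smult_right cinner_axis algebra_simps)
  have diag: "A $ i $ i = 0" for i using zero[of "axis i 1"] by (simp add: cinner_axis)
  have "A $ i $ j = 0" for i j
  proof -
    have "A $ i $ j + A $ j $ i = 0" using polar[of i 1 j] zero diag by simp
    moreover have "\<i> * A $ i $ j - \<i> * A $ j $ i = 0" using polar[of i \<i> j] zero diag by simp
    ultimately show ?thesis by (simp add: algebra_simps)
  qed
  thus ?thesis by (simp add: vec_eq_iff)
qed

lemma hermitian_if_form_real:
  fixes A :: "complex^'n^'n"
  assumes "\<And>x. cinner x (A *v x) \<in> \<real>"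
  shows "hermitian A"
proof -
  have "cinner x ((A - cadj A) *v x) = 0" for x
    using assms[of x] by (simp add: matrix_vector_mult_diff_rdistrib cinner_diff_right
        cinner_cadj_self Reals_cnj_iff)
  hence "A - cadj A = 0" by (rule matrix_eq_0_if_cinner_form_eq_0)
  thus ?thesis by simp
qed

lemma posdef_imp_hermitian: "posdef A \<Longrightarrow> hermitian A"
  unfolding posdef_def sform_cinner
  by (rule hermitian_if_form_real) (metis cinner_zero_left Reals_0)

lemma posdef_conj_rdiag_pos:
  assumes A: "posdef A" and U: "unitary U" and A_eq: "A = U ** rdiag l ** cadj U"
  shows "l k > 0"
proof -
  define x where "x = U *v axis k 1"
  have Ux: "cadj U *v x = axis k 1"
    using U by (simp add: x_def matrix_vector_mul_assoc unitary_def)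
  hence "x \<noteq> 0" by (metis axis_eq_0_iff matrix_vector_mult_0_right one_neq_zero)
  hence "0 < Re (cinner x (A *v x))" using A by (simp add: posdef_def sform_cinner)
  also have "cinner x (A *v x) = cinner (axis k 1) (rdiag l *v axis k 1)"
    by (simp add: A_eq Ux cinner_adj flip: matrix_vector_mul_assoc)
  also have "\<dots> = l k" by (simp add: cinner_axis)
  finally show ?thesis by simp
qed

lemma posdef_spectral_decomposition:
  fixes A :: "complex^'n^'n"
  assumes "posdef A"
  obtains U :: "complex^'n^'n" and l where "unitary U" "A = U ** rdiag l ** cadj U" "\<And>k. l k > 0"
proof -
  obtain U l where "unitary U" "A = U ** rdiag l ** cadj U"
    using hermitian_spectral_decomposition[OF posdef_imp_hermitian[OF assms]] by blast
  with posdef_conj_rdiag_pos[OF assms] that show thesis by blast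
qed

lemma norm_cinner_form_le:
  fixes A :: "complex^'n^'n"
  shows "norm (cinner x (A *v x)) \<le> (\<Sum>a\<in>UNIV. \<Sum>b\<in>UNIV. norm (A $ a $ b)) * (norm x)\<^sup>2"
proof -
  have "norm (cinner x (A *v x)) = norm (\<Sum>a\<in>UNIV. \<Sum>b\<in>UNIV. cnj (x $ a) * A $ a $ b * x $ b)"
    by (simp add: cinner_def matrix_vector_mult_def sum_distrib_left mult.assoc)
  also have "\<dots> \<le> (\<Sum>a\<in>UNIV. \<Sum>b\<in>UNIV. norm (cnj (x $ a) * A $ a $ b * x $ b))"
    by (rule order.trans[OF norm_sum sum_mono]) (rule norm_sum)
  also have "\<dots> \<le> (\<Sum>a\<in>UNIV. \<Sum>b\<in>UNIV. norm (A $ a $ b) * (norm x)\<^sup>2)"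
  proof (intro sum_mono)
    fix a b
    have "norm (x $ a) * norm (x $ b) \<le> norm x * norm x"
      by (intro mult_mono Finite_Cartesian_Product.norm_nth_le) auto
    hence "norm (x $ a) * norm (x $ b) * norm (A $ a $ b) \<le> norm x * norm x * norm (A $ a $ b)"
      by (rule mult_right_mono) simp
    thus "norm (cnj (x $ a) * A $ a $ b * x $ b) \<le> norm (A $ a $ b) * (norm x)\<^sup>2"
      by (simp add: norm_mult power2_eq_square mult_ac)
  qed
  also have "\<dots> = (\<Sum>a\<in>UNIV. \<Sum>b\<in>UNIV. norm (A $ a $ b)) * (norm x)\<^sup>2"
    by (simp add: sum_distrib_right)
  finally show ?thesis .
qed

lemma posdef_mat: "c > 0 \<Longrightarrow> posdef (mat (complex_of_real c) :: complex^'n^'n)"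
  by (simp add: posdef_def sform_cinner mat_matrix_vector_mult cinner_smult_right cinner_self)

text \<open>This is how strict positivity of a map yields preservation of Hermiticity.\<close>

lemma posdef_add_mat:
  fixes A :: "complex^'n^'n"
  assumes A: "hermitian A"
  defines "c \<equiv> (\<Sum>a\<in>UNIV. \<Sum>b\<in>UNIV. norm (A $ a $ b)) + 1"
  shows "posdef (A + mat (complex_of_real c))"
  unfolding posdef_def sform_cinner
proof (intro allI impI conjI)
  fix x :: "complex^'n" assume "x \<noteq> 0"
  have eq: "cinner x ((A + mat (complex_of_real c)) *v x) = cinner x (A *v x) + c * (norm x)\<^sup>2"
    by (simp add: matrix_vector_mult_add_rdistrib mat_matrix_vector_mult cinner_add_right
        cinner_smult_right cinner_self)
  show "cinner x ((A + mat (complex_of_real c)) *v x) \<in> \<real>"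
    unfolding eq using hermitian_form_real[OF A] by simp
  have "- Re (cinner x (A *v x)) \<le> norm (cinner x (A *v x))"
    using abs_Re_le_cmod[of "cinner x (A *v x)"] by linarith
  also have "\<dots> \<le> c * (norm x)\<^sup>2 - (norm x)\<^sup>2"
    using norm_cinner_form_le[of x A] by (simp add: c_def algebra_simps)
  also have "\<dots> < c * (norm x)\<^sup>2" using \<open>x \<noteq> 0\<close> by simp
  finally show "0 < Re (cinner x ((A + mat (complex_of_real c)) *v x))"
    unfolding eq by simp
qed

lemma hermitian_mpow: "posdef A \<Longrightarrow> hermitian (mpow A t)"
  unfolding mpow_def by (intro hermitian_mfun posdef_imp_hermitian)

lemma mpow_0:
  fixes A :: "complex^'n^'n"
  assumes "posdef A"
  shows "mpow A 0 = mat 1"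
proof -
  obtain U :: "complex^'n^'n" and l where U: "unitary U" and A: "A = U ** rdiag l ** cadj U" and l: "\<And>k. l k > 0"
    using posdef_spectral_decomposition[OF assms] by blast
  have "(\<lambda>k. l k powr 0) = (\<lambda>k. 1)" using l by (simp add: less_imp_neq[symmetric])
  thus ?thesis using mpow_conj_rdiag[OF U A, of 0] conj_rdiag_1[OF U] by simp
qed

lemma mpow_eq_mexp_scaleR_mlog:
  assumes U: "unitary U" and A: "A = U ** rdiag l ** cadj U" and l: "\<And>k. l k > 0"
  shows "mpow A t = mexp (t *\<^sub>R mlog A)"
proof -
  have "t *\<^sub>R mlog A = U ** rdiag (\<lambda>k. t * ln (l k)) ** cadj U"
    by (simp add: mlog_conj_rdiag[OF U A] conj_rdiag_scaleR)
  hence "mexp (t *\<^sub>R mlog A) = U ** rdiag (\<lambda>k. exp (t * ln (l k))) ** cadj U"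
    by (rule mexp_conj_rdiag[OF U])
  also have "\<dots> = mpow A t"
    using l by (simp add: mpow_conj_rdiag[OF U A] powr_def less_imp_neq[symmetric] mult.commute)
  finally show ?thesis by (rule sym)
qed

section \<open>The Hilbert--Schmidt adjoint\<close>

definition matrix_unit :: "'n \<Rightarrow> 'n \<Rightarrow> complex^'n^'n" where
  "matrix_unit j i = (\<chi> a b. (if a = j then 1 else 0) * (if b = i then 1 else 0))"

lemma matrix_unit_nth: "matrix_unit j i $ a $ b = (if a = j then 1 else 0) * (if b = i then 1 else 0)"
  by (simp add: matrix_unit_def)

lemma sum_mult_delta: "(\<Sum>k\<in>UNIV. f k * (if k = j then c else 0)) = f (j::'n::finite) * (c::'a::semiring_0)"
proof -
  have "(\<Sum>k\<in>UNIV. f k * (if k = j then c else 0)) = (\<Sum>k\<in>UNIV. if k = j then f k * c else 0)"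
    by (rule sum.cong) auto
  thus ?thesis by simp
qed

lemma trace_mult_matrix_unit: "trace (M ** matrix_unit j i) = M $ i $ j"
proof -
  have "trace (M ** matrix_unit j i) =
      (\<Sum>a\<in>UNIV. (\<Sum>k\<in>UNIV. M $ a $ k * (if k = j then 1 else 0)) * (if a = i then 1 else 0))"
    unfolding trace_def matrix_mult_nth matrix_unit_nth by (simp add: sum_distrib_right mult.assoc)
  also have "\<dots> = M $ i $ j" by (simp only: sum_mult_delta) simp
  finally show ?thesis .
qed

lemma matrix_unit_expansion: "X = (\<Sum>j\<in>UNIV. \<Sum>i\<in>UNIV. cscaleM (X $ j $ i) (matrix_unit j i))"
proof -
  have "(\<Sum>j\<in>UNIV. \<Sum>i\<in>UNIV. cscaleM (X $ j $ i) (matrix_unit j i)) $ a $ b = X $ a $ b" for a b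
  proof -
    have "(\<Sum>j\<in>UNIV. \<Sum>i\<in>UNIV. cscaleM (X $ j $ i) (matrix_unit j i)) $ a $ b
        = (\<Sum>j\<in>UNIV. (\<Sum>i\<in>UNIV. X $ j $ i * (if i = b then 1 else 0)) * (if j = a then 1 else 0))"
      unfolding sum_component cscaleM_nth matrix_unit_nth
      by (intro sum.cong refl) (simp add: sum_distrib_right mult_ac eq_commute)
    also have "\<dots> = X $ a $ b" by (simp only: sum_mult_delta) simp
    finally show ?thesis .
  qed
  thus ?thesis by (simp add: vec_eq_iff)
qed

lemma cadj_matrix_unit: "cadj (matrix_unit i j) = matrix_unit j i"
  by (simp add: vec_eq_iff matrix_unit_def)

lemma matrix_eq_if_trace_mult_eq:
  assumes "\<And>X. trace (A ** X) = trace (B ** (X::complex^'n^'n))"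
  shows "A = B"
  using assms[of "matrix_unit _ _"] by (simp add: vec_eq_iff trace_mult_matrix_unit)

lemma trace_mult_sum: "trace (Y ** (\<Sum>s\<in>S. f s)) = (\<Sum>s\<in>S. trace (Y ** f s))"
proof -
  have "trace (Y ** (\<Sum>s\<in>S. f s)) = (\<Sum>a\<in>UNIV. \<Sum>b\<in>UNIV. \<Sum>s\<in>S. Y $ a $ b * f s $ b $ a)"
    by (simp add: trace_def matrix_mult_nth sum_component sum_distrib_left)
  also have "\<dots> = (\<Sum>s\<in>S. \<Sum>a\<in>UNIV. \<Sum>b\<in>UNIV. Y $ a $ b * f s $ b $ a)"
    by (subst sum.swap) (simp add: sum.swap[of _ UNIV S])
  also have "\<dots> = (\<Sum>s\<in>S. trace (Y ** f s))"
    by (simp add: trace_def matrix_mult_nth)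
  finally show ?thesis .
qed

lemma trace_mult_cscaleM: "trace (Y ** cscaleM c Z) = c * trace (Y ** Z)"
  by (simp add: trace_def matrix_mult_nth sum_distrib_left mult_ac)

lemma cnj_trace: "cnj (trace A) = trace (cadj A)"
  by (simp add: trace_def)

lemma clinear_map_add: "clinear_map N \<Longrightarrow> N (X + Y) = N X + N Y"
  by (simp add: clinear_map_def)

lemma clinear_map_cscaleM: "clinear_map N \<Longrightarrow> N (cscaleM c X) = cscaleM c (N X)"
  by (simp add: clinear_map_def)

lemma clinear_map_diff: "clinear_map N \<Longrightarrow> N (X - Y) = N X - N Y"
  using clinear_map_add[of N "X - Y" Y] by (simp add: eq_diff_eq)

lemma cscaleM_0_left [simp]: "cscaleM 0 X = 0"
  by (simp add: vec_eq_iff)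

lemma clinear_map_0: "clinear_map N \<Longrightarrow> N 0 = 0"
  by (metis clinear_map_cscaleM cscaleM_0_left)

lemma clinear_map_sum: "clinear_map N \<Longrightarrow> N (\<Sum>s\<in>S. f s) = (\<Sum>s\<in>S. N (f s))"
  by (induction S rule: infinite_finite_induct) (simp_all add: clinear_map_0 clinear_map_add)

text \<open>An explicit Hilbert--Schmidt adjoint, witnessing the choice in \<open>madjoint\<close>.\<close>

definition hs_adjoint :: "(complex^'n^'n \<Rightarrow> complex^'m^'m) \<Rightarrow> complex^'m^'m \<Rightarrow> complex^'n^'n" where
  "hs_adjoint N Y = (\<chi> i j. trace (Y ** N (matrix_unit j i)))"

lemma trace_mult_hs_adjoint:
  assumes N: "clinear_map N"
  shows "trace (Y ** N X) = trace (hs_adjoint N Y ** X)"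
proof -
  have "trace (Y ** N X) = trace (Y ** N (\<Sum>j\<in>UNIV. \<Sum>i\<in>UNIV. cscaleM (X $ j $ i) (matrix_unit j i)))"
    by (subst matrix_unit_expansion) (rule refl)
  also have "\<dots> = (\<Sum>j\<in>UNIV. \<Sum>i\<in>UNIV. X $ j $ i * trace (Y ** N (matrix_unit j i)))"
    by (simp add: clinear_map_sum[OF N] clinear_map_cscaleM[OF N] trace_mult_sum trace_mult_cscaleM)
  also have "\<dots> = trace (hs_adjoint N Y ** X)"
    by (simp add: trace_def matrix_mult_nth hs_adjoint_def mult.commute) (rule sum.swap)
  finally show ?thesis .
qed

lemma madjoint_eq_hs_adjoint: "clinear_map N \<Longrightarrow> madjoint N = hs_adjoint N"
proof -
  assume N: "clinear_map N"
  have "\<forall>X Y. trace (Y ** N X) = trace (madjoint N Y ** X)"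
    unfolding madjoint_def by (rule someI[of _ "hs_adjoint N"]) (simp add: trace_mult_hs_adjoint[OF N])
  thus ?thesis
    by (intro ext matrix_eq_if_trace_mult_eq) (metis trace_mult_hs_adjoint[OF N])
qed

lemma trace_mult_madjoint: "clinear_map N \<Longrightarrow> trace (Y ** N X) = trace (madjoint N Y ** X)"
  by (simp add: madjoint_eq_hs_adjoint trace_mult_hs_adjoint)

lemma bounded_linear_madjoint:
  fixes N :: "complex^'n^'n \<Rightarrow> complex^'m^'m"
  assumes "clinear_map N"
  shows "bounded_linear (madjoint N)"
proof -
  have "trace ((Y + Z) ** W) = trace (Y ** W) + trace (Z ** W)"
    and "trace ((r *\<^sub>R Y) ** W) = r *\<^sub>R trace (Y ** W)" for Y Z W :: "complex^'m^'m" and r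
    by (simp_all add: trace_def matrix_mult_nth sum.distrib distrib_right scaleR_sum_right)
  hence "linear (hs_adjoint N)"
    by (intro linearI) (simp_all add: hs_adjoint_def vec_eq_iff)
  thus ?thesis by (simp add: madjoint_eq_hs_adjoint[OF assms] linear_conv_bounded_linear)
qed

lemma madjoint_mat_1:
  assumes "clinear_map N" "trace_preserving N"
  shows "madjoint N (mat 1) = mat 1"
  by (rule matrix_eq_if_trace_mult_eq)
    (use assms in \<open>simp add: trace_preserving_def flip: trace_mult_madjoint\<close>)

lemma hermitian_strictly_positive_image:
  assumes N: "clinear_map N" "strictly_positive N" and A: "hermitian A"
  shows "hermitian (N A)"
proof -
  define c where "c = (\<Sum>a\<in>UNIV. \<Sum>b\<in>UNIV. norm (A $ a $ b)) + 1"
  have "c > 0" unfolding c_def by (simp add: add_nonneg_pos sum_nonneg)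
  have "N A = N (A + mat (complex_of_real c)) - N (mat (complex_of_real c))"
    by (simp add: clinear_map_diff[OF N(1), symmetric])
  moreover have "hermitian (N (A + mat (complex_of_real c)))"
    using N(2) posdef_add_mat[OF A] unfolding c_def strictly_positive_def by (blast intro: posdef_imp_hermitian)
  moreover have "hermitian (N (mat (complex_of_real c)))"
    using N(2) posdef_mat[OF \<open>c > 0\<close>] unfolding strictly_positive_def by (blast intro: posdef_imp_hermitian)
  ultimately show ?thesis by (simp add: cadj_diff)
qed

lemma clinear_map_cadj:
  assumes N: "clinear_map N" "strictly_positive N"
  shows "N (cadj X) = cadj (N X)"
proof -
  define H1 where "H1 = cscaleM (1/2) (X + cadj X)"
  define H2 where "H2 = cscaleM (-\<i>/2) (X - cadj X)"
  have H: "hermitian H1" "hermitian H2"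
    by (simp_all add: H1_def H2_def vec_eq_iff add.commute right_diff_distrib)
  have X: "X = H1 + cscaleM \<i> H2" and X': "cadj X = H1 + cscaleM (-\<i>) H2"
    by (simp_all add: H1_def H2_def vec_eq_iff algebra_simps)
  have "cadj (N X) = cadj (N H1) + cscaleM (-\<i>) (cadj (N H2))"
    by (subst X) (simp add: clinear_map_add[OF N(1)] clinear_map_cscaleM[OF N(1)] cadj_add cadj_cscaleM)
  also have "\<dots> = N (cadj X)"
    by (simp add: X' clinear_map_add[OF N(1)] clinear_map_cscaleM[OF N(1)] hermitian_strictly_positive_image[OF N] H)
  finally show ?thesis by (rule sym)
qed

lemma hermitian_madjoint:
  assumes N: "clinear_map N" "strictly_positive N" and Y: "hermitian Y"
  shows "hermitian (madjoint N Y)"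
proof -
  have "cnj (trace (Y ** N (matrix_unit i j))) = trace (Y ** N (matrix_unit j i))" for i j
  proof -
    have "cnj (trace (Y ** N (matrix_unit i j))) = trace (cadj (N (matrix_unit i j)) ** cadj Y)"
      by (simp only: cnj_trace cadj_mult)
    also have "\<dots> = trace (N (matrix_unit j i) ** Y)"
      by (simp only: clinear_map_cadj[OF N, symmetric] cadj_matrix_unit Y)
    also have "\<dots> = trace (Y ** N (matrix_unit j i))" by (rule trace_mul_sym)
    finally show ?thesis .
  qed
  thus ?thesis by (simp add: madjoint_eq_hs_adjoint[OF N(1)] vec_eq_iff hs_adjoint_def)
qed

section \<open>Matrix norms and derivatives of matrix powers\<close>

lemma norm_le_sum_norm_nth: "norm (x::'a::real_normed_vector^'n) \<le> (\<Sum>i\<in>UNIV. norm (x $ i))"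
  unfolding norm_vec_def by (rule L2_set_le_sum) simp

lemma norm_nth_nth_le: "norm (A $ i $ j) \<le> norm (A::'a::real_normed_vector^'n^'m)"
  by (rule order.trans[OF Finite_Cartesian_Product.norm_nth_le Finite_Cartesian_Product.norm_nth_le])

lemma norm_le_if_norm_nth_nth_le:
  assumes "\<And>i j. norm (A $ i $ j) \<le> M"
  shows "norm (A::'a::real_normed_vector^'n^'m) \<le> real CARD('m) * real CARD('n) * M"
proof -
  have "norm A \<le> (\<Sum>i\<in>UNIV. \<Sum>j\<in>UNIV. norm (A $ i $ j))"
    by (rule order.trans[OF norm_le_sum_norm_nth sum_mono[OF norm_le_sum_norm_nth]])
  also have "\<dots> \<le> (\<Sum>i\<in>(UNIV::'m set). \<Sum>j\<in>(UNIV::'n set). M)"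
    by (intro sum_mono assms)
  finally show ?thesis by simp
qed

lemma bounded_bilinear_matrix_mult:
  "bounded_bilinear ((**) :: complex^'k^'n \<Rightarrow> complex^'p^'k \<Rightarrow> complex^'p^'n)"
proof (rule bounded_bilinear.intro)
  show "\<exists>K. \<forall>A B. norm ((A::complex^'k^'n) ** (B::complex^'p^'k)) \<le> norm A * norm B * K"
  proof (intro exI allI)
    fix A :: "complex^'k^'n" and B :: "complex^'p^'k"
    have "norm ((A ** B) $ i $ j) \<le> real CARD('k) * (norm A * norm B)" for i j
    proof -
      have "norm ((A ** B) $ i $ j) \<le> (\<Sum>k\<in>UNIV. norm (A $ i $ k * B $ k $ j))"
        unfolding matrix_mult_nth by (rule norm_sum)
      also have "\<dots> \<le> (\<Sum>k\<in>(UNIV::'k set). norm A * norm B)"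
        by (intro sum_mono) (simp add: norm_mult mult_mono norm_nth_nth_le)
      finally show ?thesis by simp
    qed
    hence "norm (A ** B) \<le> real CARD('n) * real CARD('p) * (real CARD('k) * (norm A * norm B))"
      by (rule norm_le_if_norm_nth_nth_le)
    thus "norm (A ** B) \<le> norm A * norm B * (real CARD('n) * real CARD('p) * real CARD('k))"
      by (simp add: mult_ac)
  qed
qed (simp_all add: matrix_add_ldistrib matrix_add_rdistrib scalar_matrix_assoc matrix_scalar_ac)

lemmas has_vector_derivative_matrix_mult =
  bounded_bilinear.has_vector_derivative[OF bounded_bilinear_matrix_mult]

lemma bounded_linear_matrix_mult_both: "bounded_linear (\<lambda>X. A ** X ** (B::complex^_^_))"
  using bounded_linear_compose[OF bounded_bilinear.bounded_linear_left[OF bounded_bilinear_matrix_mult]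
      bounded_bilinear.bounded_linear_right[OF bounded_bilinear_matrix_mult]] .

lemma rdiag_eq_sum: "rdiag d = (\<Sum>k\<in>UNIV. d k *\<^sub>R rdiag (\<lambda>i. if k = i then 1 else 0))"
proof -
  have "(\<Sum>k\<in>UNIV. d k *\<^sub>R rdiag (\<lambda>i. if k = i then 1 else 0)) $ i $ j = rdiag d $ i $ j" for i j
    by (cases "i = j") (simp_all add: sum_component of_real_def sum_mult_delta flip: scaleR_sum_left)
  thus ?thesis by (simp add: vec_eq_iff)
qed

lemma has_vector_derivative_rdiag:
  assumes "\<And>k. ((\<lambda>x. d x k) has_real_derivative d' k) (at x within S)"
  shows "((\<lambda>x. rdiag (d x)) has_vector_derivative rdiag d') (at x within S)"
  unfolding rdiag_eq_sum[of "d _"] rdiag_eq_sum[of d']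
  by (auto intro!: derivative_eq_intros assms)

lemma has_vector_derivative_mpow:
  fixes A :: "complex^'n^'n"
  assumes A: "posdef A" and e: "(e has_real_derivative e') (at x)"
  shows "((\<lambda>t. mpow A (e t)) has_vector_derivative e' *\<^sub>R (mlog A ** mpow A (e x))) (at x)"
proof -
  obtain U :: "complex^'n^'n" and l where U: "unitary U" and A_eq: "A = U ** rdiag l ** cadj U"
    and l: "\<And>k. l k > 0"
    using posdef_spectral_decomposition[OF A] by blast
  have "((\<lambda>t. l k powr e t) has_real_derivative l k powr e x * (e' * ln (l k))) (at x)" for k
    using DERIV_powr[OF DERIV_const l[of k] e] by simp
  hence "((\<lambda>t. U ** rdiag (\<lambda>k. l k powr e t) ** cadj U) has_vector_derivative
      U ** rdiag (\<lambda>k. l k powr e x * (e' * ln (l k))) ** cadj U) (at x)"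
    by (intro bounded_linear.has_vector_derivative[OF bounded_linear_matrix_mult_both]
        has_vector_derivative_rdiag)
  moreover have "U ** rdiag (\<lambda>k. l k powr e x * (e' * ln (l k))) ** cadj U = e' *\<^sub>R (mlog A ** mpow A (e x))"
    by (simp add: mlog_conj_rdiag[OF U A_eq] mpow_conj_rdiag[OF U A_eq] conj_rdiag_mult[OF U]
        conj_rdiag_scaleR mult_ac)
  ultimately show ?thesis by (simp add: mpow_conj_rdiag[OF U A_eq])
qed

lemma has_vector_derivative_mpow_at_0:
  assumes A: "posdef A" and e: "(e has_real_derivative e') (at 0)" "e 0 = 0"
  shows "((\<lambda>t. mpow A (e t)) has_vector_derivative e' *\<^sub>R mlog A) (at 0)"
  using has_vector_derivative_mpow[OF A e(1)] by (simp add: e(2) mpow_0[OF A])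

lemma has_vector_derivative_mpow_sandwich_at_0:
  fixes A :: "complex^'n^'n"
  assumes A: "posdef A" and e: "(e has_real_derivative e') (at 0)" "e 0 = 0"
    and M: "(M has_vector_derivative D) (at 0)" "M 0 = mat 1"
  shows "((\<lambda>t. mpow A (e t) ** M t ** mpow A (e t)) has_vector_derivative D + (2 * e') *\<^sub>R mlog A)
    (at 0)"
proof -
  have "((\<lambda>t. mpow A (e t) ** M t ** mpow A (e t)) has_vector_derivative
      D + e' *\<^sub>R mlog A + e' *\<^sub>R mlog A) (at 0)"
    using has_vector_derivative_matrix_mult[OF has_vector_derivative_matrix_mult[OF
        has_vector_derivative_mpow_at_0[OF A e] M(1)] has_vector_derivative_mpow_at_0[OF A e]]
    by (simp add: M(2) e(2) mpow_0[OF A] add_ac)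
  moreover have "(2 * e') *\<^sub>R mlog A = e' *\<^sub>R mlog A + e' *\<^sub>R mlog A"
    by (simp add: scaleR_2 flip: scaleR_scaleR)
  ultimately show ?thesis by (simp add: add.assoc)
qed

lemma tendsto_difference_quotient:
  assumes "(f has_vector_derivative D) (at x)"
  shows "((\<lambda>h. (1 / h) *\<^sub>R (f (x + h) - f x)) \<longlongrightarrow> D) (at 0)"
proof -
  have "((\<lambda>h. norm (f (x + h) - f x - h *\<^sub>R D) / norm h) \<longlongrightarrow> 0) (at 0)"
    using assms by (simp add: has_vector_derivative_def has_derivative_at)
  moreover have "eventually (\<lambda>h. norm (f (x + h) - f x - h *\<^sub>R D) / norm h =
      norm ((1 / h) *\<^sub>R (f (x + h) - f x) - D)) (at 0)"
  proof (rule eventually_at_filter[THEN iffD2, OF always_eventually], intro allI impI)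
    fix h :: real assume "h \<noteq> 0"
    have "(1 / h) *\<^sub>R (f (x + h) - f x) - D = (1 / h) *\<^sub>R (f (x + h) - f x - h *\<^sub>R D)"
      using \<open>h \<noteq> 0\<close> by (simp add: scaleR_diff_right)
    thus "norm (f (x + h) - f x - h *\<^sub>R D) / norm h = norm ((1 / h) *\<^sub>R (f (x + h) - f x) - D)"
      by (simp add: divide_inverse mult.commute)
  qed
  ultimately have "((\<lambda>h. norm ((1 / h) *\<^sub>R (f (x + h) - f x) - D)) \<longlongrightarrow> 0) (at 0)"
    by (rule Lim_transform_eventually)
  thus ?thesis by (simp add: tendsto_norm_zero_iff LIM_zero_iff)
qed

section \<open>Eigenvalue bounds and the matrix logarithm near the identity\<close>

lemma norm_nth_unitary_le_1:
  assumes "unitary V"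
  shows "norm (V $ a $ k) \<le> 1"
proof -
  have "cnj z * z = complex_of_real ((norm z)\<^sup>2)" for z :: complex
    by (subst complex_norm_square) (rule mult.commute)
  moreover have "(\<Sum>b\<in>UNIV. cnj (V $ b $ k) * V $ b $ k) = 1"
    using assms by (simp add: unitary_def mat_nth flip: matrix_mult_nth cadj_nth)
  ultimately have "(\<Sum>b\<in>UNIV. complex_of_real ((norm (V $ b $ k))\<^sup>2)) = 1"
    by simp
  hence "(\<Sum>b\<in>UNIV. (norm (V $ b $ k))\<^sup>2) = 1"
    by (metis of_real_eq_1_iff of_real_sum)
  moreover have "(norm (V $ a $ k))\<^sup>2 \<le> (\<Sum>b\<in>UNIV. (norm (V $ b $ k))\<^sup>2)"
    by (rule member_le_sum) auto
  ultimately show ?thesis by (simp add: power_le_one_iff)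
qed

lemma norm_conj_rdiag_le:
  fixes V :: "complex^'n^'n"
  assumes V: "unitary V" and d: "\<And>k. \<bar>d k\<bar> \<le> M"
  shows "norm (V ** rdiag d ** cadj V) \<le> real CARD('n) ^ 3 * M"
proof -
  have "norm ((V ** rdiag d ** cadj V) $ a $ b) \<le> real CARD('n) * M" for a b
  proof -
    have "norm ((V ** rdiag d ** cadj V) $ a $ b) \<le> (\<Sum>k\<in>UNIV. norm (V $ a $ k * d k * cnj (V $ b $ k)))"
      unfolding matrix_mult_nth[of "V ** rdiag d"] matrix_mult_rdiag_nth cadj_nth by (rule norm_sum)
    also have "\<dots> \<le> (\<Sum>k\<in>(UNIV::'n set). M)"
    proof (rule sum_mono)
      fix k
      have "norm (V $ a $ k) * \<bar>d k\<bar> * norm (V $ b $ k) \<le> 1 * M * 1"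
        by (intro mult_mono norm_nth_unitary_le_1[OF V] d) (auto intro: order.trans[OF abs_ge_zero d])
      thus "norm (V $ a $ k * d k * cnj (V $ b $ k)) \<le> M" by (simp add: norm_mult)
    qed
    finally show ?thesis by simp
  qed
  hence "norm (V ** rdiag d ** cadj V) \<le> real CARD('n) * real CARD('n) * (real CARD('n) * M)"
    by (rule norm_le_if_norm_nth_nth_le)
  thus ?thesis by (simp add: power3_eq_cube mult_ac)
qed

lemma abs_eigenvalue_diff_le:
  fixes V :: "complex^'n^'n"
  assumes V: "unitary V" and A: "A = V ** rdiag \<mu> ** cadj V"
  shows "\<bar>\<mu> k - c\<bar> \<le> real CARD('n) ^ 2 * norm (A - c *\<^sub>R mat 1)"
proof -
  define W where "W = A - c *\<^sub>R mat 1"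
  have "c *\<^sub>R mat 1 = V ** rdiag (\<lambda>k. c * 1) ** cadj V"
    using conj_rdiag_scaleR[of c V "\<lambda>k. 1"] conj_rdiag_1[OF V] by simp
  hence "cadj V ** W ** V = (cadj V ** V) ** rdiag (\<lambda>k. \<mu> k - c) ** (cadj V ** V)"
    by (simp add: W_def A conj_rdiag_diff matrix_mul_assoc)
  hence "(cadj V ** W ** V) $ k $ k = complex_of_real (\<mu> k - c)"
    using V by (simp add: unitary_def)
  hence "\<bar>\<mu> k - c\<bar> = norm ((cadj V ** W ** V) $ k $ k)"
    by (metis norm_of_real)
  also have "\<dots> = norm (\<Sum>b\<in>UNIV. \<Sum>a\<in>UNIV. cnj (V $ a $ k) * W $ a $ b * V $ b $ k)"
    by (simp add: matrix_mult_nth sum_distrib_right)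
  also have "\<dots> \<le> (\<Sum>b\<in>UNIV. \<Sum>a\<in>UNIV. norm (cnj (V $ a $ k) * W $ a $ b * V $ b $ k))"
    by (rule order.trans[OF norm_sum sum_mono]) (rule norm_sum)
  also have "\<dots> \<le> (\<Sum>b\<in>(UNIV::'n set). \<Sum>a\<in>(UNIV::'n set). norm W)"
  proof (intro sum_mono)
    fix a b
    have "norm (V $ a $ k) * norm (W $ a $ b) * norm (V $ b $ k) \<le> 1 * norm W * 1"
      by (intro mult_mono norm_nth_unitary_le_1[OF V] norm_nth_nth_le) auto
    thus "norm (cnj (V $ a $ k) * W $ a $ b * V $ b $ k) \<le> norm W" by (simp add: norm_mult)
  qed
  finally show ?thesis by (simp add: W_def power2_eq_square)
qed

lemma abs_eigenvalue_diff_1_le: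
  fixes V :: "complex^'n^'n"
  assumes V: "unitary V" and A: "A = V ** rdiag \<mu> ** cadj V"
    and small: "norm (A - mat 1) \<le> 1 / (2 * real CARD('n) ^ 2)"
  shows "\<bar>\<mu> k - 1\<bar> \<le> 1 / 2"
proof -
  have "\<bar>\<mu> k - 1\<bar> \<le> real CARD('n) ^ 2 * norm (A - mat 1)"
    using abs_eigenvalue_diff_le[OF V A, of k 1] by simp
  also have "\<dots> \<le> real CARD('n) ^ 2 * (1 / (2 * real CARD('n) ^ 2))"
    by (intro mult_left_mono small) simp
  finally show ?thesis by simp
qed

lemma mpow_eq_mexp_scaleR_mlog_near_1:
  fixes A :: "complex^'n^'n"
  assumes A: "hermitian A" and small: "norm (A - mat 1) \<le> 1 / (2 * real CARD('n) ^ 2)"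
  shows "mpow A t = mexp (t *\<^sub>R mlog A)"
proof -
  obtain V :: "complex^'n^'n" and \<mu> where V: "unitary V" and A_eq: "A = V ** rdiag \<mu> ** cadj V"
    using hermitian_spectral_decomposition[OF A] by blast
  have "\<mu> k > 0" for k using abs_eigenvalue_diff_1_le[OF V A_eq small, of k] by linarith
  thus ?thesis by (rule mpow_eq_mexp_scaleR_mlog[OF V A_eq])
qed

text \<open>From \<open>\<bar>ln x - (x - 1)\<bar> \<le> 2 (x - 1)\<^sup>2\<close> for \<open>\<bar>x - 1\<bar> \<le> 1/2\<close>, applied to each eigenvalue.\<close>

lemma norm_mlog_sub_le:
  fixes A :: "complex^'n^'n"
  assumes A: "hermitian A" and small: "norm (A - mat 1) \<le> 1 / (2 * real CARD('n) ^ 2)"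
  shows "norm (mlog A - (A - mat 1)) \<le> 2 * real CARD('n) ^ 7 * (norm (A - mat 1))\<^sup>2"
proof -
  define n where "n = real CARD('n)"
  obtain V :: "complex^'n^'n" and \<mu> where V: "unitary V" and A_eq: "A = V ** rdiag \<mu> ** cadj V"
    using hermitian_spectral_decomposition[OF A] by blast
  have eq: "mlog A - (A - mat 1) = V ** rdiag (\<lambda>k. ln (\<mu> k) - (\<mu> k - 1)) ** cadj V"
    unfolding mlog_conj_rdiag[OF V A_eq] by (simp add: A_eq conj_rdiag_diff flip: conj_rdiag_1[OF V])
  have bound: "\<bar>ln (\<mu> k) - (\<mu> k - 1)\<bar> \<le> 2 * n ^ 4 * (norm (A - mat 1))\<^sup>2" for k
  proof -
    have "\<bar>ln (1 + (\<mu> k - 1)) - (\<mu> k - 1)\<bar> \<le> 2 * (\<mu> k - 1)\<^sup>2"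
      using abs_eigenvalue_diff_1_le[OF V A_eq small] by (intro abs_ln_one_plus_x_minus_x_bound)
    also have "(\<mu> k - 1)\<^sup>2 \<le> (n\<^sup>2 * norm (A - mat 1))\<^sup>2"
      using abs_eigenvalue_diff_le[OF V A_eq, of k 1]
      by (simp add: n_def flip: abs_le_square_iff)
    finally show ?thesis by (simp add: power_mult_distrib)
  qed
  have "norm (mlog A - (A - mat 1)) \<le> n ^ 3 * (2 * n ^ 4 * (norm (A - mat 1))\<^sup>2)"
    unfolding eq n_def by (rule norm_conj_rdiag_le[OF V bound[unfolded n_def]])
  also have "\<dots> = 2 * n ^ 7 * (norm (A - mat 1))\<^sup>2"
    by (simp add: mult.left_commute flip: power_add)
  finally show ?thesis by (simp add: n_def)
qed

section \<open>Continuity of the matrix exponential\<close>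

primrec matrix_power :: "complex^'n^'n \<Rightarrow> nat \<Rightarrow> complex^'n^'n" where
  "matrix_power A 0 = mat 1"
| "matrix_power A (Suc m) = A ** matrix_power A m"

definition exp_taylor :: "complex^'n^'n \<Rightarrow> nat \<Rightarrow> complex^'n^'n" where
  "exp_taylor A K = (\<Sum>m<K. (1 / fact m) *\<^sub>R matrix_power A m)"

lemma matrix_power_conj_rdiag:
  assumes V: "unitary V" and A: "A = V ** rdiag \<mu> ** cadj V"
  shows "matrix_power A m = V ** rdiag (\<lambda>k. \<mu> k ^ m) ** cadj V"
  by (induction m) (simp_all add: conj_rdiag_1[OF V] A conj_rdiag_mult[OF V])

lemma exp_taylor_conj_rdiag:
  assumes V: "unitary V" and A: "A = V ** rdiag \<mu> ** cadj V"
  shows "exp_taylor A K = V ** rdiag (\<lambda>k. \<Sum>m<K. \<mu> k ^ m / fact m) ** cadj V"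
proof (induction K)
  case 0
  thus ?case by (simp add: exp_taylor_def)
next
  case (Suc K)
  have "exp_taylor A (Suc K) = exp_taylor A K + (1 / fact K) *\<^sub>R matrix_power A K"
    by (simp add: exp_taylor_def)
  thus ?case
    by (simp add: Suc matrix_power_conj_rdiag[OF V A] conj_rdiag_scaleR conj_rdiag_add)
qed

lemma continuous_on_exp_taylor: "continuous_on S (\<lambda>A. exp_taylor A K)"
proof -
  have "continuous_on S (\<lambda>A. matrix_power A m)" for m
    by (induction m) (simp_all add: continuous_on_const
        bounded_bilinear.continuous_on[OF bounded_bilinear_matrix_mult continuous_on_id])
  thus ?thesis unfolding exp_taylor_def by (intro continuous_intros)
qed

lemma abs_exp_sub_taylor_le:
  fixes x R :: real
  assumes "\<bar>x\<bar> \<le> R"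
  shows "\<bar>exp x - (\<Sum>m<K. x ^ m / fact m)\<bar> \<le> exp R * R ^ K / fact K"
proof -
  obtain t where "\<bar>t\<bar> \<le> \<bar>x\<bar>" and "exp x = (\<Sum>m<K. x ^ m / fact m) + exp t / fact K * x ^ K"
    using Maclaurin_exp_le[of x K] by blast
  hence "\<bar>exp x - (\<Sum>m<K. x ^ m / fact m)\<bar> = exp t * \<bar>x\<bar> ^ K / fact K"
    by (simp add: abs_mult power_abs)
  also have "\<dots> \<le> exp R * R ^ K / fact K"
    using \<open>\<bar>t\<bar> \<le> \<bar>x\<bar>\<close> assms by (intro divide_right_mono mult_mono power_mono) auto
  finally show ?thesis .
qed

lemma norm_mexp_sub_exp_taylor_le:
  fixes A :: "complex^'n^'n"
  assumes A: "hermitian A" and B: "norm A \<le> B"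
  defines "R \<equiv> real CARD('n) ^ 2 * B"
  shows "norm (mexp A - exp_taylor A K) \<le> real CARD('n) ^ 3 * (exp R * R ^ K / fact K)"
proof -
  obtain V :: "complex^'n^'n" and \<mu> where V: "unitary V" and A_eq: "A = V ** rdiag \<mu> ** cadj V"
    using hermitian_spectral_decomposition[OF A] by blast
  have "\<bar>\<mu> k\<bar> \<le> R" for k
    using abs_eigenvalue_diff_le[OF V A_eq, of k 0] B by (simp add: R_def mult_left_mono order_trans)
  hence bound: "\<bar>exp (\<mu> k) - (\<Sum>m<K. \<mu> k ^ m / fact m)\<bar> \<le> exp R * R ^ K / fact K" for k
    by (rule abs_exp_sub_taylor_le)
  have eq: "mexp A - exp_taylor A K =
      V ** rdiag (\<lambda>k. exp (\<mu> k) - (\<Sum>m<K. \<mu> k ^ m / fact m)) ** cadj V"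
    by (simp add: mexp_conj_rdiag[OF V A_eq] exp_taylor_conj_rdiag[OF V A_eq] conj_rdiag_diff)
  show ?thesis unfolding eq by (rule norm_conj_rdiag_le[OF V bound])
qed

lemma continuous_on_mexp: "continuous_on {A :: complex^'n^'n. hermitian A \<and> norm A \<le> B} mexp"
proof (rule uniform_limit_theorem[where f = "\<lambda>K A. exp_taylor A K" and F = sequentially])
  define R where "R = real CARD('n) ^ 2 * B"
  have "(\<lambda>K. real CARD('n) ^ 3 * (exp R * (R ^ K /\<^sub>R fact K))) \<longlonglongrightarrow> real CARD('n) ^ 3 * (exp R * 0)"
    by (intro tendsto_intros summable_LIMSEQ_zero[OF summable_exp_generic])
  hence err: "(\<lambda>K. real CARD('n) ^ 3 * (exp R * R ^ K / fact K)) \<longlonglongrightarrow> 0"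
    by (simp add: divide_inverse mult_ac)
  show "uniform_limit {A :: complex^'n^'n. hermitian A \<and> norm A \<le> B} (\<lambda>K A. exp_taylor A K) mexp sequentially"
  proof (rule uniform_limitI)
    fix e :: real assume "e > 0"
    with err have "eventually (\<lambda>K. real CARD('n) ^ 3 * (exp R * R ^ K / fact K) < e) sequentially"
      by (rule order_tendstoD)
    thus "eventually (\<lambda>K. \<forall>A\<in>{A :: complex^'n^'n. hermitian A \<and> norm A \<le> B}. dist (exp_taylor A K) (mexp A) < e) sequentially"
    proof (rule eventually_mono, intro ballI, unfold mem_Collect_eq)
      fix K and A :: "complex^'n^'n"
      assume K: "real CARD('n) ^ 3 * (exp R * R ^ K / fact K) < e"
        and A: "hermitian A \<and> norm A \<le> B"
      have "norm (mexp A - exp_taylor A K) \<le> real CARD('n) ^ 3 * (exp R * R ^ K / fact K)"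
        using A norm_mexp_sub_exp_taylor_le[of A B K] by (simp add: R_def)
      thus "dist (exp_taylor A K) (mexp A) < e"
        using K by (simp add: dist_norm norm_minus_commute)
    qed
  qed
qed (simp_all add: continuous_on_exp_taylor)

lemma tendsto_mexp:
  fixes G :: "'a \<Rightarrow> complex^'n^'n"
  assumes lim: "(G \<longlongrightarrow> L) F" and G: "eventually (\<lambda>x. hermitian (G x)) F" and L: "hermitian L"
  shows "((\<lambda>x. mexp (G x)) \<longlongrightarrow> mexp L) F"
proof (rule continuous_on_tendsto_compose[OF continuous_on_mexp lim])
  have "eventually (\<lambda>x. norm (G x) < norm L + 1) F"
    using tendsto_norm[OF lim] by (rule order_tendstoD) simp
  with G show "eventually (\<lambda>x. G x \<in> {A. hermitian A \<and> norm A \<le> norm L + 1}) F"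
    by eventually_elim simp
qed (simp add: L)

section \<open>Powers with exponent \<open>1/p\<close>\<close>

lemma tendsto_cadj [tendsto_intros]: "(f \<longlongrightarrow> A) F \<Longrightarrow> ((\<lambda>x. cadj (f x)) \<longlongrightarrow> cadj A) F"
  unfolding cadj_def by (intro tendsto_intros)

text \<open>With \<open>q(p) = (F(p) - 1)/p \<rightarrow> L\<close>, the expansion of the logarithm gives
  \<open>\<parallel>(1/p) log F(p) - q(p)\<parallel> = O(\<parallel>F(p) - 1\<parallel> \<parallel>q(p)\<parallel>) \<rightarrow> 0\<close>.\<close>

lemma tendsto_scaleR_mlog:
  fixes F :: "real \<Rightarrow> complex^'n^'n"
  assumes F': "(F has_vector_derivative L) (at 0)" and F0: "F 0 = mat 1" and F: "\<And>p. hermitian (F p)"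
  shows "((\<lambda>p. (1 / p) *\<^sub>R mlog (F p)) \<longlongrightarrow> L) (at 0)"
proof -
  define n where "n = real CARD('n)"
  define \<delta> where "\<delta> p = norm (F p - mat 1)" for p
  define q where "q p = (1 / p) *\<^sub>R (F p - mat 1)" for p
  have q: "(q \<longlongrightarrow> L) (at 0)"
    using tendsto_difference_quotient[OF F'] by (simp add: q_def[abs_def] F0)
  have "(F \<longlongrightarrow> mat 1) (at 0)"
    using has_vector_derivative_continuous[OF F'] F0 by (simp add: continuous_at)
  hence \<delta>: "(\<delta> \<longlongrightarrow> 0) (at 0)"
    unfolding \<delta>_def by (simp add: tendsto_norm_zero_iff LIM_zero_iff)
  have "norm ((1 / p) *\<^sub>R mlog (F p) - q p) \<le> 2 * n ^ 7 * \<delta> p * norm (q p)"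
    if small: "\<delta> p < 1 / (2 * n ^ 2)" for p
  proof -
    have "norm ((1 / p) *\<^sub>R mlog (F p) - q p) = \<bar>1 / p\<bar> * norm (mlog (F p) - (F p - mat 1))"
      by (simp add: q_def flip: scaleR_diff_right)
    also have "\<dots> \<le> \<bar>1 / p\<bar> * (2 * n ^ 7 * (\<delta> p)\<^sup>2)"
      using norm_mlog_sub_le[OF F, of p] small by (intro mult_left_mono) (simp_all add: n_def \<delta>_def)
    also have "\<dots> = 2 * n ^ 7 * \<delta> p * norm (q p)"
      by (simp add: q_def \<delta>_def power2_eq_square)
    finally show ?thesis .
  qed
  moreover have "eventually (\<lambda>p. \<delta> p < 1 / (2 * n ^ 2)) (at 0)"
    using \<delta> by (rule order_tendstoD) (simp add: n_def)
  ultimately have "eventually (\<lambda>p. norm ((1 / p) *\<^sub>R mlog (F p) - q p) \<le> 2 * n ^ 7 * \<delta> p * norm (q p))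
      (at 0)"
    by (simp add: eventually_mono)
  moreover have "((\<lambda>p. 2 * n ^ 7 * \<delta> p * norm (q p)) \<longlongrightarrow> 0) (at 0)"
    using tendsto_mult[OF tendsto_mult[OF tendsto_const \<delta>] tendsto_norm[OF q]] by simp
  ultimately have "((\<lambda>p. (1 / p) *\<^sub>R mlog (F p) - q p) \<longlongrightarrow> 0) (at 0)"
    by (rule Lim_null_comparison)
  from tendsto_add[OF this q] show ?thesis
    by simp
qed

theorem tendsto_mpow_inverse_exponent:
  fixes F :: "real \<Rightarrow> complex^'n^'n"
  assumes F': "(F has_vector_derivative L) (at 0)" and F0: "F 0 = mat 1" and F: "\<And>p. hermitian (F p)"
  shows "((\<lambda>p. mpow (F p) (1 / p)) \<longlongrightarrow> mexp L) (at 0)"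
proof -
  define G where "G p = (1 / p) *\<^sub>R mlog (F p)" for p
  have G_lim: "(G \<longlongrightarrow> L) (at 0)"
    using tendsto_scaleR_mlog[OF F' F0 F] by (simp add: G_def[abs_def])
  have G: "hermitian (G p)" for p
    by (simp add: G_def cadj_scaleR mlog_def hermitian_mfun F)
  have "(G \<longlongrightarrow> cadj L) (at 0)"
    using tendsto_cadj[OF G_lim] by (simp add: G)
  from tendsto_unique[OF at_neq_bot this G_lim] have "hermitian L" .
  with G_lim G have "((\<lambda>p. mexp (G p)) \<longlongrightarrow> mexp L) (at 0)"
    by (intro tendsto_mexp) simp_all
  moreover
  have "(F \<longlongrightarrow> mat 1) (at 0)"
    using has_vector_derivative_continuous[OF F'] F0 by (simp add: continuous_at)
  hence "eventually (\<lambda>p. dist (F p) (mat 1) < 1 / (2 * real CARD('n) ^ 2)) (at 0)"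
    by (rule tendstoD) simp
  hence "eventually (\<lambda>p. mexp (G p) = mpow (F p) (1 / p)) (at 0)"
    by eventually_elim (simp add: G_def dist_norm mpow_eq_mexp_scaleR_mlog_near_1[OF F])
  ultimately show ?thesis by (rule Lim_transform_eventually)
qed

theorem lemma1:
  fixes \<rho> \<sigma> :: "complex^'n^'n"
    and N :: "complex^'n^'n \<Rightarrow> complex^'m^'m"
  assumes "posdef \<rho>" and "density \<rho>"
    and "posdef \<sigma>" and "density \<sigma>"
    and "clinear_map N" and "completely_positive N" and "trace_preserving N"
    and "strictly_positive N"
  shows "((\<lambda>p::real. mpow (mpow \<sigma> (p/2) **
              madjoint N (mpow (N \<sigma>) (-p/2) ** mpow (N \<rho>) p ** mpow (N \<sigma>) (-p/2))
              ** mpow \<sigma> (p/2)) (1/p))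
          \<longlongrightarrow> mexp (mlog \<sigma> + madjoint N (mlog (N \<rho>) - mlog (N \<sigma>)))) (at 0)"
proof -
  note \<rho> = \<open>posdef \<rho>\<close> and \<sigma> = \<open>posdef \<sigma>\<close> and N = \<open>clinear_map N\<close> \<open>strictly_positive N\<close>
  have N\<rho>: "posdef (N \<rho>)" and N\<sigma>: "posdef (N \<sigma>)"
    using N(2) \<rho> \<sigma> by (auto simp: strictly_positive_def)
  have e: "((\<lambda>p. p / 2) has_real_derivative 1 / 2) (at 0)" "((\<lambda>p. - p / 2) has_real_derivative - 1 / 2) (at 0)"
    "((\<lambda>p. p) has_real_derivative 1) (at 0)"
    by (auto intro!: derivative_eq_intros)
  define B where "B p = mpow (N \<sigma>) (-p/2) ** mpow (N \<rho>) p ** mpow (N \<sigma>) (-p/2)" for p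
  define F where "F p = mpow \<sigma> (p/2) ** madjoint N (B p) ** mpow \<sigma> (p/2)" for p
  have B: "(B has_vector_derivative mlog (N \<rho>) - mlog (N \<sigma>)) (at 0)" "B 0 = mat 1"
    using has_vector_derivative_mpow_sandwich_at_0[OF N\<sigma> e(2) _ has_vector_derivative_mpow_at_0[OF N\<rho> e(3)]]
    by (simp_all add: B_def[abs_def] mpow_0 N\<rho> N\<sigma>)
  have "(F has_vector_derivative mlog \<sigma> + madjoint N (mlog (N \<rho>) - mlog (N \<sigma>))) (at 0)"
    using has_vector_derivative_mpow_sandwich_at_0[OF \<sigma> e(1) _
        bounded_linear.has_vector_derivative[OF bounded_linear_madjoint[OF N(1)] B(1)]]
    by (simp add: F_def[abs_def] B(2) madjoint_mat_1[OF N(1) \<open>trace_preserving N\<close>] add.commute)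
  moreover have "F 0 = mat 1"
    by (simp add: F_def B(2) madjoint_mat_1[OF N(1) \<open>trace_preserving N\<close>] mpow_0 \<sigma>)
  moreover have "hermitian (F p)" for p
    by (simp add: F_def B_def cadj_mult matrix_mul_assoc hermitian_mpow \<sigma> N\<rho> N\<sigma> hermitian_madjoint[OF N])
  ultimately show ?thesis
    unfolding F_def B_def by (rule tendsto_mpow_inverse_exponent)
qed

end
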